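(* For odd $m$, $s_1^{(m)\dagger}\Omega_m s_2^{(m)}=1$, where $\Omega_m=\begin{pmatrix}0&\mathbb{1}\\\mathbb{1}&0\end{pmatrix}$ is the $2m\times 2m$ symplectic form and $\mathbb{1}$ is the $m\times m$ identity matrix.
   Context: The Chamon model (one qubit per cubic lattice site) in the Laurent polynomial formalism over $\mathbb{F}_2[x^{\pm1},y^{\pm1},z^{\pm1}]$ has stabilizer map $\sigma=\begin{pmatrix}(1+x^{-1})(y^{-1}+z^{-1})\\(1+y^{-1})(x^{-1}+z^{-1})\end{pmatrix}$ and excitation map $\epsilon=\sigma^\dagger\Omega_1=\begin{pmatrix}(1+y)(x+z)&(1+x)(y+z)\end{pmatrix}$, where $^\dagger$ is transposition with spatial inversion. Define the fracton creation operators $s_1=x^{m-1}(1+y+\dots+y^{m-1})(1+z/x+\dots+(z/x)^{m-1})(1,0)^T$ and $s_2=y^{m-1}(1+x+\dots+x^{m-1})(1+z/y+\dots+(z/y)^{m-1})(0,1)^T$, which satisfy $\epsilon s_1=(1+y^m)(x^m+z^m)$ and $\epsilon s_2=(1+x^m)(y^m+z^m)$. $s_i^{(m)}$ denotes the representation of $s_i$ after coarse-graining the lattice by a factor $m$ in each direction (translation variables $x'=x^m$, $y'=y^m$, $z'=z^m$). *)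

theory Defs
  imports Main "HOL-Library.Poly_Mapping" "HOL-Library.Product_Plus" "HOL-Library.Z2"
begin

text \<open>Laurent polynomials over F2 in x, y, z = group algebra F2[Z^3]:
  finitely supported maps from exponent triples to the field bit = F2.\<close>
type_synonym lpoly = "(int \<times> int \<times> int) \<Rightarrow>\<^sub>0 bit"

definition mono :: "int \<Rightarrow> int \<Rightarrow> int \<Rightarrow> lpoly" where
  "mono a b c = Poly_Mapping.single (a, b, c) 1"

definition X :: lpoly where "X = mono 1 0 0"
definition Y :: lpoly where "Y = mono 0 1 0"
definition Z :: lpoly where "Z = mono 0 0 1"
definition Xinv :: lpoly where "Xinv = mono (-1) 0 0"
definition Yinv :: lpoly where "Yinv = mono 0 (-1) 0"

text \<open>Spatial inversion x -> x^-1, y -> y^-1, z -> z^-1 (the entrywise part of the dagger).\<close>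
definition inv_sp :: "lpoly \<Rightarrow> lpoly" where
  "inv_sp f = Abs_poly_mapping (\<lambda>v. Poly_Mapping.lookup f (- v))"

text \<open>Coarse-graining by factor m: f = sum over (a,b,c) in {0..m-1}^3 of
  x^a y^b z^c f_abc(x^m, y^m, z^m); coarse m f (a,b,c) is f_abc as a Laurent polynomial
  in the coarse variables x' = x^m, y' = y^m, z' = z^m.\<close>
definition coarse :: "nat \<Rightarrow> lpoly \<Rightarrow> nat \<times> nat \<times> nat \<Rightarrow> lpoly" where
  "coarse m f abc = (case abc of (a, b, c) \<Rightarrow>
     Abs_poly_mapping (\<lambda>(p, q, r). Poly_Mapping.lookup f (int m * p + int a, int m * q + int b, int m * r + int c)))"

text \<open>A stabilizer vector for one qubit per site: pair (first, second) component.
  After coarse-graining it becomes a vector with 2 m^3 entries, the first m^3 entries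
  being coarse m (fst s) abc and the last m^3 being coarse m (snd s) abc.
  symp_form m u v = u^dagger Omega v with Omega = [[0, 1],[1, 0]] (blocks of size m^3).\<close>
definition symp_form :: "nat \<Rightarrow> lpoly \<times> lpoly \<Rightarrow> lpoly \<times> lpoly \<Rightarrow> lpoly" where
  "symp_form m u v =
     (\<Sum>abc \<in> {0..<m} \<times> {0..<m} \<times> {0..<m}.
        inv_sp (coarse m (fst u) abc) * coarse m (snd v) abc
      + inv_sp (coarse m (snd u) abc) * coarse m (fst v) abc)"

definition s1 :: "nat \<Rightarrow> lpoly \<times> lpoly" where
  "s1 m = (X ^ (m - 1) * (\<Sum>i<m. Y ^ i) * (\<Sum>j<m. (Z * Xinv) ^ j), 0)"

definition s2 :: "nat \<Rightarrow> lpoly \<times> lpoly" where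
  "s2 m = (0, Y ^ (m - 1) * (\<Sum>i<m. X ^ i) * (\<Sum>j<m. (Z * Yinv) ^ j))"

end

theory Submission
  imports Defs
begin

text \<open>The first component of \<open>s1\<close> is the indicator of the square membrane
  \<open>{(u, v, w). 0 \<le> v, w < m, u + w = m - 1}\<close>, and the second component of \<open>s2\<close> is the
  same square with \<open>x\<close> and \<open>y\<close> exchanged. Each square fits into a single coarse cell, so
  after coarse-graining every component is a constant: the sublattice \<open>(a, b, c)\<close> carries
  \<open>1\<close> iff \<open>a + c = m - 1\<close> for \<open>s1\<close>, and iff \<open>b + c = m - 1\<close> for \<open>s2\<close>. The symplectic
  product therefore counts the \<open>m\<close> sublattices \<open>(m - 1 - c, m - 1 - c, c)\<close>, which
  gives \<open>1\<close> over \<open>\<bbbF>\<^sub>2\<close> exactly when \<open>m\<close> is odd.\<close>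

lemma mono_mult: "mono a b c * mono a' b' c' = mono (a + a') (b + b') (c + c')"
  by (simp add: mono_def mult_single)

lemma mono_0 [simp]: "mono 0 0 0 = 1"
  by (simp add: mono_def zero_prod_def[symmetric])

lemma mono_power: "mono a b c ^ n = mono (int n * a) (int n * b) (int n * c)"
  by (induction n) (simp_all add: mono_mult algebra_simps)

lemma lookup_sum_single_inj_on:
  assumes "finite A" "inj_on k A"
  shows "Poly_Mapping.lookup (\<Sum>x\<in>A. Poly_Mapping.single (k x) c) v = (c when v \<in> k ` A)"
proof -
  have "Poly_Mapping.lookup (\<Sum>x\<in>A. Poly_Mapping.single (k x) c) v = (\<Sum>y\<in>k ` A. (c when y = v))"
    using assms(2) by (simp add: lookup_sum lookup_single sum.reindex)
  also have "\<dots> = (c when v \<in> k ` A)"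
    using assms(1) by (simp add: when_def)
  finally show ?thesis .
qed

lemma lookup_coarse:
  assumes "0 < m"
  shows "Poly_Mapping.lookup (coarse m f (a, b, c)) (p, q, r)
    = Poly_Mapping.lookup f (int m * p + int a, int m * q + int b, int m * r + int c)"
proof -
  define h where "h = (\<lambda>(p, q, r). (int m * p + int a, int m * q + int b, int m * r + int c))"
  have "inj h" using assms by (auto simp: h_def inj_def)
  then have "finite (h -` Poly_Mapping.keys f)" by (simp add: finite_vimageI)
  then have "finite {x. Poly_Mapping.lookup f (h x) \<noteq> 0}" by (simp add: vimage_def in_keys_iff)
  then show ?thesis by (simp add: coarse_def h_def case_prod_beta')
qed

lemma lookup_inv_sp: "Poly_Mapping.lookup (inv_sp f) v = Poly_Mapping.lookup f (- v)"
proof -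
  have "finite (uminus -` Poly_Mapping.keys f)" by (simp add: finite_vimageI)
  then show ?thesis by (simp add: inv_sp_def vimage_def in_keys_iff)
qed

lemma inv_sp_of_bool [simp]: "inv_sp (of_bool P) = of_bool P"
  by (rule poly_mapping_eqI) (auto simp: lookup_inv_sp lookup_one)

lemma coarse_zero [simp]: "coarse m 0 abc = 0"
  by (simp add: coarse_def case_prod_beta')

lemma of_nat_odd_poly_mapping_bit:
  assumes "odd n"
  shows "(of_nat n :: 'a::monoid_add \<Rightarrow>\<^sub>0 bit) = 1"
proof -
  obtain k where "n = 2 * k + 1" using assms oddE by blast
  then have "(of_nat n :: bit) = 1" by simp
  then show ?thesis by (metis single_of_nat single_one)
qed

lemma int_mult_add_in_range_iff:
  fixes m q b :: int
  assumes "0 \<le> b" "b < m"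
  shows "0 \<le> m * q + b \<and> m * q + b < m \<longleftrightarrow> q = 0"
proof
  assume "0 \<le> m * q + b \<and> m * q + b < m"
  then have "m * q < m * 1" "m * 0 < m * (q + 1)"
    using assms unfolding distrib_left by linarith+
  then have "q < 1" "0 < q + 1"
    using assms by (simp_all only: mult_less_cancel_left_pos)
  then show "q = 0" by simp
qed (use assms in simp)

lemma fst_s1_eq_sum:
  "fst (s1 m) = (\<Sum>(i, j)\<in>{..<m} \<times> {..<m}. mono (int m - 1 - int j) (int i) (int j))"
proof (cases "m = 0")
  case False
  then have "fst (s1 m)
    = mono (int m - 1) 0 0 * (\<Sum>i<m. mono 0 (int i) 0) * (\<Sum>j<m. mono (- int j) 0 (int j))"
    by (simp add: s1_def X_def Y_def Z_def Xinv_def mono_power mono_mult)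
  then show ?thesis
    unfolding sum.cartesian_product[symmetric]
    by (simp add: sum_distrib_left sum_distrib_right mono_mult) (rule sum.swap)
qed (simp add: s1_def)

lemma snd_s2_eq_sum:
  "snd (s2 m) = (\<Sum>(i, j)\<in>{..<m} \<times> {..<m}. mono (int i) (int m - 1 - int j) (int j))"
proof (cases "m = 0")
  case False
  then have "snd (s2 m)
    = mono 0 (int m - 1) 0 * (\<Sum>i<m. mono (int i) 0 0) * (\<Sum>j<m. mono 0 (- int j) (int j))"
    by (simp add: s2_def X_def Y_def Z_def Yinv_def mono_power mono_mult)
  then show ?thesis
    unfolding sum.cartesian_product[symmetric]
    by (simp add: sum_distrib_left sum_distrib_right mono_mult) (rule sum.swap)
qed (simp add: s2_def)

definition membrane :: "nat \<Rightarrow> (int \<times> int \<times> int) set" where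
  "membrane m = {(u, v, w). 0 \<le> v \<and> v < int m \<and> 0 \<le> w \<and> w < int m \<and> u + w = int m - 1}"

lemma lookup_fst_s1:
  "Poly_Mapping.lookup (fst (s1 m)) (u, v, w) = (1 when (u, v, w) \<in> membrane m)"
proof -
  define k where "k = (\<lambda>(i, j). (int m - 1 - int j, int i, int j))"
  have "fst (s1 m) = (\<Sum>x\<in>{..<m} \<times> {..<m}. Poly_Mapping.single (k x) 1)"
    by (simp add: fst_s1_eq_sum mono_def k_def case_prod_beta')
  moreover have "inj_on k ({..<m} \<times> {..<m})"
    by (auto simp: k_def inj_on_def)
  moreover have "(u, v, w) \<in> k ` ({..<m} \<times> {..<m}) \<longleftrightarrow> (u, v, w) \<in> membrane m"
    by (auto simp: k_def membrane_def intro: rev_image_eqI[of "(nat v, nat w)"])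
  ultimately show ?thesis
    by (simp add: lookup_sum_single_inj_on)
qed

lemma lookup_snd_s2:
  "Poly_Mapping.lookup (snd (s2 m)) (u, v, w) = (1 when (v, u, w) \<in> membrane m)"
proof -
  define k where "k = (\<lambda>(i, j). (int i, int m - 1 - int j, int j))"
  have "snd (s2 m) = (\<Sum>x\<in>{..<m} \<times> {..<m}. Poly_Mapping.single (k x) 1)"
    by (simp add: snd_s2_eq_sum mono_def k_def case_prod_beta')
  moreover have "inj_on k ({..<m} \<times> {..<m})"
    by (auto simp: k_def inj_on_def)
  moreover have "(u, v, w) \<in> k ` ({..<m} \<times> {..<m}) \<longleftrightarrow> (v, u, w) \<in> membrane m"
    by (auto simp: k_def membrane_def intro: rev_image_eqI[of "(nat u, nat w)"])
  ultimately show ?thesis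
    by (simp add: lookup_sum_single_inj_on)
qed

lemma coarse_point_in_membrane_iff:
  assumes "a < m" "b < m" "c < m"
  shows "(int m * p + int a, int m * q + int b, int m * r + int c) \<in> membrane m
    \<longleftrightarrow> p = 0 \<and> q = 0 \<and> r = 0 \<and> a + c = m - 1"
proof -
  have "0 \<le> int m * q + int b \<and> int m * q + int b < int m \<longleftrightarrow> q = 0"
       "0 \<le> int m * r + int c \<and> int m * r + int c < int m \<longleftrightarrow> r = 0"
       "0 \<le> int m * p + int a \<and> int m * p + int a < int m \<longleftrightarrow> p = 0"
    using assms by (simp_all add: int_mult_add_in_range_iff)
  then show ?thesis
    using assms unfolding membrane_def by auto
qed

lemma coarse_fst_s1:
  assumes "a < m" "b < m" "c < m"
  shows "coarse m (fst (s1 m)) (a, b, c) = of_bool (a + c = m - 1)"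
proof (rule poly_mapping_eqI)
  fix k :: "int \<times> int \<times> int"
  show "Poly_Mapping.lookup (coarse m (fst (s1 m)) (a, b, c)) k
    = Poly_Mapping.lookup (of_bool (a + c = m - 1)) k"
    using assms by (cases k)
      (auto simp: lookup_coarse lookup_fst_s1 coarse_point_in_membrane_iff lookup_one zero_prod_def when_def)
qed

lemma coarse_snd_s2:
  assumes "a < m" "b < m" "c < m"
  shows "coarse m (snd (s2 m)) (a, b, c) = of_bool (b + c = m - 1)"
proof (rule poly_mapping_eqI)
  fix k :: "int \<times> int \<times> int"
  show "Poly_Mapping.lookup (coarse m (snd (s2 m)) (a, b, c)) k
    = Poly_Mapping.lookup (of_bool (b + c = m - 1)) k"
    using assms by (cases k)
      (auto simp: lookup_coarse lookup_snd_s2 coarse_point_in_membrane_iff lookup_one zero_prod_def when_def)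
qed

theorem lemma1:
  fixes m :: nat
  assumes "odd m"
  shows "symp_form m (s1 m) (s2 m) = 1"
proof -
  let ?A = "{0..<m} \<times> {0..<m} \<times> {0..<m}"
  let ?P = "\<lambda>(a, b, c). a + c = m - 1 \<and> b + c = m - 1"
  have "snd (s1 m) = 0" "fst (s2 m) = 0"
    by (simp_all add: s1_def s2_def)
  moreover have
    "inv_sp (coarse m (fst (s1 m)) abc) * coarse m (snd (s2 m)) abc = of_bool (?P abc)"
    if "abc \<in> ?A" for abc
    using that by (cases abc) (simp add: coarse_fst_s1 coarse_snd_s2)
  ultimately have "symp_form m (s1 m) (s2 m) = (\<Sum>abc\<in>?A. of_bool (?P abc))"
    unfolding symp_form_def by (intro sum.cong) simp_all
  also have "\<dots> = of_nat (card (?A \<inter> {abc. ?P abc}))"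
    by simp
  also have "?A \<inter> {abc. ?P abc} = (\<lambda>c. (m - 1 - c, m - 1 - c, c)) ` {..<m}"
    using assms by (auto simp: image_iff elim: oddE)
  also have "card \<dots> = m"
    by (simp add: card_image inj_on_def)
  finally show ?thesis
    using assms by (simp add: of_nat_odd_poly_mapping_bit)
qed

end
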